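(* For the fully labeled two-dimensional rearrangement problem (LTR) with a uniformly random initial permutation, SweepCyclesLTR and SwitchCyclesLTR compute globally optimal solutions in the asymptotic sense for the total cost $J_T(P)=Nc_p+\sum_{i=0}^N\|p_i-p_{i+1}\|_2\,c_t$ (fixed constants $c_p,c_t>0$): the ratio of the expected total cost of the plan returned by either algorithm to the expected minimum of $J_T$ over all valid plans tends to $1$ as the number of items $m_1m_2\to\infty$.
   Context: Setting (LTR). An $m_1\times m_2$ lattice (rows $\times$ columns); the cell in row $r$ and column $c$ is located at $(r,c)\in\mathbb R^2$ and labeled $(c-1)m_1+r$. Each cell initially holds one item; items carry distinct labels $1,\dots,m_1m_2$. An instance is a permutation $\pi$ of $\{1,\dots,m_1m_2\}$, $\pi_i$ being the label of the item initially in cell $i$; the goal is that item $j$ ends in cell $j$. A robot end-effector holds at most one item and starts at the top-left cell $p_0$ holding nothing. A pick-n-swap at a cell $p$: if holding nothing, pick up the item in $p$; if holding an item and $p$ contains an item, exchange them; if holding an item and $p$ is empty, put it into $p$. A plan is a sequence of cells $P=(p_0,\dots,p_N)$ visited in order with a pick-n-swap at each $p_1,\dots,p_N$, then a return to $p_{N+1}:=p_0$; it is valid if at the end every item is at its goal and nothing is held; $N$ is its number of pick-n-swaps. Cycle following a non-trivial cycle of $\pi$ (cell $i$ points to cell $\pi_i$) from cell $i$: pick up the item at $i$, repeatedly carry the held item to its goal and swap, and finally place the last held item into $i$. SweepCyclesLTR: cycle-follow the non-trivial cycles $c_1,\dots,c_k$ one at a time in order, then return to $p_0$. SwitchCyclesLTR: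 also cycle-follows all cycles, but may interrupt a cycle $c_1$ between consecutive items $a_1,b_1$ to travel from $a_1$ to an item $a_2$ of another cycle $c_2$, complete $c_2$ (and possibly further cycles), then go to $b_1$ to finish $c_1$; the switching schedule is chosen via a directed minimum spanning tree on the graph whose vertices are the cycles and the rest position, with directed edge weights given by the switching distances. *)

theory Defs
  imports Complex_Main "HOL-Combinatorics.Permutations"
begin

text \<open>Cell with label l (1 <= l <= m1*m2) lies in row r = (l-1) mod m1 + 1 and column
  c = (l-1) div m1 + 1, i.e. l = (c-1) m1 + r; its position is (r,c) in R^2.\<close>
definition loc :: "nat \<Rightarrow> nat \<Rightarrow> real \<times> real" where
  "loc m1 l = (real ((l - 1) mod m1 + 1), real ((l - 1) div m1 + 1))"

definition l2dist :: "real \<times> real \<Rightarrow> real \<times> real \<Rightarrow> real" where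
  "l2dist x y = sqrt ((fst x - fst y)^2 + (snd x - snd y)^2)"

text \<open>A plan is the list [p_1,...,p_N] of cells at which pick-n-swaps are performed;
  p_0 = p_{N+1} = cell 1 (top-left). A state is (arrangement, held item).
  Pick-n-swap at p: the held item (if any) goes into p, the former content of p
  (if any) becomes the held item. This covers pick, swap and put.\<close>
definition pns :: "(nat \<Rightarrow> nat option) \<times> nat option \<Rightarrow> nat \<Rightarrow> (nat \<Rightarrow> nat option) \<times> nat option" where
  "pns st p = ((fst st)(p := snd st), fst st p)"

definition run :: "(nat \<Rightarrow> nat option) \<times> nat option \<Rightarrow> nat list \<Rightarrow> (nat \<Rightarrow> nat option) \<times> nat option" where
  "run st P = foldl pns st P"

definition init_arr :: "nat \<Rightarrow> (nat \<Rightarrow> nat) \<Rightarrow> nat \<Rightarrow> nat option" where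
  "init_arr n \<pi> = (\<lambda>i. if i \<in> {1..n} then Some (\<pi> i) else None)"

definition goal_arr :: "nat \<Rightarrow> nat \<Rightarrow> nat option" where
  "goal_arr n = (\<lambda>i. if i \<in> {1..n} then Some i else None)"

definition valid_plan :: "nat \<Rightarrow> (nat \<Rightarrow> nat) \<Rightarrow> nat list \<Rightarrow> bool" where
  "valid_plan n \<pi> P \<longleftrightarrow> set P \<subseteq> {1..n} \<and> run (init_arr n \<pi>, None) P = (goal_arr n, None)"

definition JT :: "real \<Rightarrow> real \<Rightarrow> nat \<Rightarrow> nat list \<Rightarrow> real" where
  "JT cp ct m1 P =
     (let path = 1 # P @ [1] in
      real (length P) * cp
      + (\<Sum>i<length P + 1. l2dist (loc m1 (path ! i)) (loc m1 (path ! Suc i)) * ct))"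

definition Jopt :: "real \<Rightarrow> real \<Rightarrow> nat \<Rightarrow> nat \<Rightarrow> (nat \<Rightarrow> nat) \<Rightarrow> real" where
  "Jopt cp ct m1 m2 \<pi> = Inf (JT cp ct m1 ` {P. valid_plan (m1 * m2) \<pi> P})"

definition orb :: "(nat \<Rightarrow> nat) \<Rightarrow> nat \<Rightarrow> nat set" where
  "orb \<pi> s = {(\<pi> ^^ k) s | k. True}"

definition cyc_len :: "(nat \<Rightarrow> nat) \<Rightarrow> nat \<Rightarrow> nat" where
  "cyc_len \<pi> s = (LEAST k. 0 < k \<and> (\<pi> ^^ k) s = s)"

text \<open>Cycle following from cell s: pick at s, carry each held item to its goal and swap,
  finally place the last item into s. Visited cells: s, pi s, ..., pi^(L-1) s, s.\<close>
definition cyc_follow :: "(nat \<Rightarrow> nat) \<Rightarrow> nat \<Rightarrow> nat list" where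
  "cyc_follow \<pi> s = s # map (\<lambda>k. (\<pi> ^^ Suc k) s) [0..<cyc_len \<pi> s]"

definition nontriv :: "nat \<Rightarrow> (nat \<Rightarrow> nat) \<Rightarrow> nat set" where
  "nontriv n \<pi> = {x \<in> {1..n}. \<pi> x \<noteq> x}"

text \<open>SweepCyclesLTR: cycle-follow the non-trivial cycles one at a time, in any order and
  from any starting cell of each cycle (one start per non-trivial cycle).\<close>
definition sweep_plans :: "nat \<Rightarrow> (nat \<Rightarrow> nat) \<Rightarrow> nat list set" where
  "sweep_plans n \<pi> =
     {concat (map (cyc_follow \<pi>) starts) | starts.
        (\<forall>s \<in> set starts. \<pi> s \<noteq> s) \<and>
        distinct (map (orb \<pi>) starts) \<and>
        set (map (orb \<pi>) starts) = orb \<pi> ` nontriv n \<pi>}"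

text \<open>SwitchCyclesLTR: cycle following with switches. swc pi S xs: xs follows the cycle
  of some start s, and right after handling the item at a (i.e. between consecutive items
  a and pi a of the cycle) it may switch to a sequence ins a of further (recursively
  switched) cycles before going on to pi a; S is the set of cells of all cycles involved.
  swseq pi S xs: xs is a concatenation of such groups, performed one after the other from
  the rest position. Any switching schedule (in particular the one selected by the directed
  minimum spanning tree) is of this form.\<close>
inductive swc :: "(nat \<Rightarrow> nat) \<Rightarrow> nat set \<Rightarrow> nat list \<Rightarrow> bool"
  and swseq :: "(nat \<Rightarrow> nat) \<Rightarrow> nat set \<Rightarrow> nat list \<Rightarrow> bool"
  for \<pi> :: "nat \<Rightarrow> nat" where
  swseq_nil: "swseq \<pi> {} []"
| swseq_snoc: "swseq \<pi> S1 xs \<Longrightarrow> swc \<pi> S2 ys \<Longrightarrow> S1 \<inter> S2 = {} \<Longrightarrow> swseq \<pi> (S1 \<union> S2) (xs @ ys)"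
| swc_cycle: "\<pi> s \<noteq> s \<Longrightarrow>
    (\<forall>a \<in> orb \<pi> s. swseq \<pi> (T a) (ins a)) \<Longrightarrow>
    (\<forall>a \<in> orb \<pi> s. T a \<inter> orb \<pi> s = {}) \<Longrightarrow>
    (\<forall>a \<in> orb \<pi> s. \<forall>b \<in> orb \<pi> s. a \<noteq> b \<longrightarrow> T a \<inter> T b = {}) \<Longrightarrow>
    swc \<pi> (orb \<pi> s \<union> (\<Union>a \<in> orb \<pi> s. T a))
      (s # concat (map (\<lambda>k. ins ((\<pi> ^^ k) s) @ [(\<pi> ^^ Suc k) s]) [0..<cyc_len \<pi> s]))"

definition switch_plans :: "nat \<Rightarrow> (nat \<Rightarrow> nat) \<Rightarrow> nat list set" where
  "switch_plans n \<pi> = {xs. swseq \<pi> (nontriv n \<pi>) xs}"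

definition E_perm :: "nat \<Rightarrow> ((nat \<Rightarrow> nat) \<Rightarrow> real) \<Rightarrow> real" where
  "E_perm n f = (\<Sum>\<pi> \<in> {\<pi>. \<pi> permutes {1..n}}. f \<pi>) / real (card {\<pi>. \<pi> permutes {1..n}})"

definition tends_to_one :: "(nat \<Rightarrow> nat \<Rightarrow> real) \<Rightarrow> bool" where
  "tends_to_one f \<longleftrightarrow> (\<forall>\<epsilon>>0. \<exists>M. \<forall>m1 m2. M \<le> m1 * m2 \<longrightarrow> \<bar>f m1 m2 - 1\<bar> < \<epsilon>)"

end

(* Every valid plan picks up each misplaced item at least once, and it travels at least the
   total displacement D(pi) = sum_c |c - pi c|: the sum of the distances of all items from their
   goals, plus the distance from the end-effector to the goal of the held item, is unchanged by a
   pick-n-swap and drops by at most the length of a move. Conversely, cycle following, with or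
   without switches, makes one pick-n-swap per misplaced item plus one per cycle, and travels
   D(pi) plus at most two lattice diameters m1 + m2 per cycle. Hence the optimum and the cost of
   both algorithms lie between L(pi) = c_p #misplaced + c_t D(pi) and L(pi) + O((m1 + m2) #cycles).
   For a uniformly random permutation of n = m1 m2 cells, E[D] >= (n - 1)(m1 + m2)/6, whereas
   the expected number of cycles is the harmonic number H_n <= 2 sqrt n, so both expected costs
   agree up to a factor 1 + O(1/sqrt n). *)

theory Submission
  imports Defs "HOL-Combinatorics.Orbits"
begin

section \<open>Distances on the lattice\<close>

abbreviation cell_dist :: "nat \<Rightarrow> nat \<Rightarrow> nat \<Rightarrow> real" where
  "cell_dist m1 i j \<equiv> l2dist (loc m1 i) (loc m1 j)"

lemma l2dist_nonneg: "0 \<le> l2dist x y"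
  by (simp add: l2dist_def)

lemma l2dist_self [simp]: "l2dist x x = 0"
  by (simp add: l2dist_def)

lemma l2dist_triangle: "l2dist x z \<le> l2dist x y + l2dist y z"
proof -
  have "l2dist x z = sqrt (((fst x - fst y) + (fst y - fst z))\<^sup>2 + ((snd x - snd y) + (snd y - snd z))\<^sup>2)"
    by (simp add: l2dist_def)
  also have "\<dots> \<le> l2dist x y + l2dist y z"
    unfolding l2dist_def by (rule real_sqrt_sum_squares_triangle_ineq)
  finally show ?thesis .
qed

lemma abs_fst_le_l2dist: "\<bar>fst x - fst y\<bar> \<le> l2dist x y"
  unfolding l2dist_def by (metis real_sqrt_abs real_sqrt_le_mono le_add_same_cancel1 zero_le_power2)

lemma abs_snd_le_l2dist: "\<bar>snd x - snd y\<bar> \<le> l2dist x y"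
  unfolding l2dist_def by (metis real_sqrt_abs real_sqrt_le_mono le_add_same_cancel2 zero_le_power2)

lemma loc_grid: "r < m1 \<Longrightarrow> loc m1 (Suc (c * m1 + r)) = (real (r + 1), real (c + 1))"
  by (simp add: loc_def)

lemma grid_cell_cases:
  fixes i :: nat
  assumes "i \<in> {1..m1 * m2}"
  obtains c r where "c < m2" "r < m1" "i = Suc (c * m1 + r)"
proof
  have "i - 1 < m2 * m1" using assms by (auto simp: mult.commute)
  then show "(i - 1) div m1 < m2" by (rule less_mult_imp_div_less)
  show "(i - 1) mod m1 < m1" using assms by (cases "m1 = 0") auto
  show "i = Suc ((i - 1) div m1 * m1 + (i - 1) mod m1)" using assms by simp
qed

lemma cell_dist_le:
  assumes "i \<in> {1..m1 * m2}" "j \<in> {1..m1 * m2}"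
  shows "cell_dist m1 i j \<le> real (m1 + m2)"
proof -
  obtain c r where c: "c < m2" "r < m1" "i = Suc (c * m1 + r)" using grid_cell_cases[OF assms(1)] .
  obtain c' r' where c': "c' < m2" "r' < m1" "j = Suc (c' * m1 + r')" using grid_cell_cases[OF assms(2)] .
  have "cell_dist m1 i j \<le> \<bar>real r - real r'\<bar> + \<bar>real c - real c'\<bar>"
    unfolding l2dist_def c(3) c'(3) loc_grid[OF c(2)] loc_grid[OF c'(2)]
    using sqrt_sum_squares_le_sum_abs by simp
  also have "\<dots> \<le> real m1 + real m2" using c c' by linarith
  finally show ?thesis by simp
qed

fun path_len :: "nat \<Rightarrow> nat \<Rightarrow> nat list \<Rightarrow> real" where
  "path_len m1 q [] = 0"
| "path_len m1 q (p # ps) = cell_dist m1 q p + path_len m1 p ps"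

lemma path_len_append: "path_len m1 q (xs @ ys) = path_len m1 q xs + path_len m1 (last (q # xs)) ys"
  by (induction xs arbitrary: q) auto

lemma path_len_conv_sum:
  "path_len m1 q xs = (\<Sum>i<length xs. cell_dist m1 ((q # xs) ! i) (xs ! i))"
  by (induction xs arbitrary: q) (simp_all add: sum.lessThan_Suc_shift del: sum.lessThan_Suc)

lemma JT_eq_path_len:
  "JT cp ct m1 P = real (length P) * cp + ct * (path_len m1 1 P + cell_dist m1 (last (1 # P)) 1)"
proof -
  have "(\<Sum>i<length P + 1. cell_dist m1 ((1 # P @ [1]) ! i) ((1 # P @ [1]) ! Suc i))
      = path_len m1 1 P + cell_dist m1 (last (1 # P)) 1"
    using path_len_conv_sum[of m1 1 "P @ [1]"] by (simp add: path_len_append)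
  then show ?thesis
    unfolding JT_def Let_def sum_distrib_right[symmetric] by (simp add: mult.commute)
qed

section \<open>Orbits of a permutation\<close>

lemma orb_self: "x \<in> orb \<pi> x"
  unfolding orb_def by (auto intro: exI[where x=0])

lemma funpow_in_orb: "(\<pi> ^^ k) x \<in> orb \<pi> x"
  unfolding orb_def by auto

lemma apply_in_orb: "y \<in> orb \<pi> x \<Longrightarrow> \<pi> y \<in> orb \<pi> x"
  unfolding orb_def by (auto intro: exI[where x="Suc k" for k])

lemma orb_subsetI:
  assumes "x \<in> A" "\<And>y. y \<in> A \<Longrightarrow> \<pi> y \<in> A"
  shows "orb \<pi> x \<subseteq> A"
proof -
  have "(\<pi> ^^ k) x \<in> A" for k
    by (induction k) (use assms in auto)
  then show ?thesis unfolding orb_def by auto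
qed

lemma orb_subset_permutes: "\<pi> permutes S \<Longrightarrow> x \<in> S \<Longrightarrow> orb \<pi> x \<subseteq> S"
  by (rule orb_subsetI) (auto simp: permutes_in_image)

lemma orb_fixpoint: "\<pi> x = x \<Longrightarrow> orb \<pi> x = {x}"
  using orb_self orb_subsetI[of x "{x}" \<pi>] by auto

lemma permutation_if_permutes_interval:
  fixes \<pi> :: "nat \<Rightarrow> nat"
  shows "\<pi> permutes {a..b} \<Longrightarrow> permutation \<pi>"
  by (rule permutes_imp_permutation[OF finite_atLeastAtMost])

lemma orb_eq_orbit: "permutation \<pi> \<Longrightarrow> orb \<pi> x = orbit \<pi> x"
  unfolding orb_def by (simp add: orbit_altdef_permutation)

lemma orb_eq:
  assumes "permutation \<pi>" "y \<in> orb \<pi> x"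
  shows "orb \<pi> y = orb \<pi> x"
  using assms orbit_cyclic_eq3[OF cyclic_on_orbit'] by (simp add: orb_eq_orbit)

lemma orb_disjoint:
  assumes "permutation \<pi>" "orb \<pi> x \<noteq> orb \<pi> y"
  shows "orb \<pi> x \<inter> orb \<pi> y = {}"
proof (rule ccontr)
  assume "orb \<pi> x \<inter> orb \<pi> y \<noteq> {}"
  then obtain z where "z \<in> orb \<pi> x" "z \<in> orb \<pi> y" by blast
  then show False using orb_eq[OF assms(1)] assms(2) by metis
qed

lemma finite_orb: "permutation \<pi> \<Longrightarrow> finite (orb \<pi> x)"
  by (simp add: orb_eq_orbit finite_orbit permutation_self_in_orbit)

lemma orb_image_disjoint:
  assumes "\<forall>x\<in>A. orb \<pi> x \<subseteq> A" "\<forall>x\<in>B. orb \<pi> x \<subseteq> B" "A \<inter> B = {}"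
  shows "orb \<pi> ` A \<inter> orb \<pi> ` B = {}"
proof -
  have "orb \<pi> x \<noteq> orb \<pi> y" if "x \<in> A" "y \<in> B" for x y
    using assms that orb_self[of y \<pi>] by blast
  then show ?thesis by blast
qed

lemma orb_cong:
  assumes "\<forall>x\<in>orb \<pi> t. \<sigma> x = \<pi> x"
  shows "orb \<sigma> t = orb \<pi> t" and "cyc_len \<sigma> t = cyc_len \<pi> t" and "cyc_follow \<sigma> t = cyc_follow \<pi> t"
proof -
  have e: "(\<sigma> ^^ k) t = (\<pi> ^^ k) t" for k
    by (induction k) (use assms funpow_in_orb in auto)
  show "orb \<sigma> t = orb \<pi> t" unfolding orb_def e ..
  show l: "cyc_len \<sigma> t = cyc_len \<pi> t" unfolding cyc_len_def e ..
  show "cyc_follow \<sigma> t = cyc_follow \<pi> t" unfolding cyc_follow_def l e ..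
qed

lemma nontriv_orb_closed:
  assumes "\<pi> permutes {1..n}" "x \<in> nontriv n \<pi>" "y \<in> orb \<pi> x"
  shows "y \<in> nontriv n \<pi>"
proof -
  have pm: "permutation \<pi>" using assms(1) by (rule permutation_if_permutes_interval)
  have "y \<in> {1..n}" using orb_subset_permutes[OF assms(1)] assms(2,3) unfolding nontriv_def by blast
  moreover have "\<pi> y \<noteq> y"
    using orb_eq[OF pm assms(3)] orb_fixpoint[of \<pi> y] orb_self[of x \<pi>] assms(2)
    unfolding nontriv_def by auto
  ultimately show ?thesis unfolding nontriv_def by simp
qed

lemma union_orb_nontriv:
  assumes "\<pi> permutes {1..n}"
  shows "\<Union> (orb \<pi> ` nontriv n \<pi>) = nontriv n \<pi>"
  using nontriv_orb_closed[OF assms] orb_self[of _ \<pi>] by auto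

locale perm_cycle =
  fixes \<pi> :: "nat \<Rightarrow> nat" and s :: nat
  assumes permutation: "permutation \<pi>"
begin

lemma cyc_len_eq_funpow_dist1: "cyc_len \<pi> s = funpow_dist1 \<pi> s s"
proof -
  have s: "s \<in> orbit \<pi> s" using permutation by (rule permutation_self_in_orbit)
  show ?thesis unfolding cyc_len_def
  proof (rule Least_equality)
    show "0 < funpow_dist1 \<pi> s s \<and> (\<pi> ^^ funpow_dist1 \<pi> s s) s = s"
      using funpow_dist1_prop[OF s] by simp
    show "funpow_dist1 \<pi> s s \<le> k" if "0 < k \<and> (\<pi> ^^ k) s = s" for k
      using funpow_dist1_le_self[OF _ _ s] that by blast
  qed
qed

lemma cyc_len_pos: "0 < cyc_len \<pi> s"
  by (simp add: cyc_len_eq_funpow_dist1)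

lemma funpow_cyc_len: "(\<pi> ^^ cyc_len \<pi> s) s = s"
  using funpow_dist1_prop[OF permutation_self_in_orbit[OF permutation]]
  by (simp add: cyc_len_eq_funpow_dist1)

lemma inj_on_funpow: "inj_on (\<lambda>k. (\<pi> ^^ k) s) {0..<cyc_len \<pi> s}"
  using inj_on_funpow_dist1[OF permutation_self_in_orbit[OF permutation]]
  by (simp add: cyc_len_eq_funpow_dist1)

lemma image_funpow: "(\<lambda>k. (\<pi> ^^ k) s) ` {0..<cyc_len \<pi> s} = orb \<pi> s"
  using orbit_conv_funpow_dist1[OF permutation_self_in_orbit[OF permutation]]
  by (simp add: cyc_len_eq_funpow_dist1 orb_eq_orbit[OF permutation])

lemma card_orb: "card (orb \<pi> s) = cyc_len \<pi> s"
  using card_image[OF inj_on_funpow] image_funpow by simp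

lemma sum_orb: "(\<Sum>a\<in>orb \<pi> s. g a) = (\<Sum>k<cyc_len \<pi> s. g ((\<pi> ^^ k) s))"
  using sum.reindex[OF inj_on_funpow, of g] image_funpow by (simp add: atLeast0LessThan)

end

section \<open>Cost of switching plans\<close>

definition displacement :: "nat \<Rightarrow> (nat \<Rightarrow> nat) \<Rightarrow> nat set \<Rightarrow> real" where
  "displacement m1 \<pi> S = (\<Sum>c\<in>S. cell_dist m1 c (\<pi> c))"

definition num_cycles :: "(nat \<Rightarrow> nat) \<Rightarrow> nat set \<Rightarrow> nat" where
  "num_cycles \<pi> S = card (orb \<pi> ` S)"

lemma displacement_nonneg: "0 \<le> displacement m1 \<pi> S"
  unfolding displacement_def by (rule sum_nonneg) (simp add: l2dist_nonneg)

lemma displacement_Un: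
  "finite A \<Longrightarrow> finite B \<Longrightarrow> A \<inter> B = {} \<Longrightarrow>
   displacement m1 \<pi> (A \<union> B) = displacement m1 \<pi> A + displacement m1 \<pi> B"
  unfolding displacement_def by (rule sum.union_disjoint)

lemma num_cycles_Un:
  assumes "finite A" "finite B" "\<forall>x\<in>A. orb \<pi> x \<subseteq> A" "\<forall>x\<in>B. orb \<pi> x \<subseteq> B" "A \<inter> B = {}"
  shows "num_cycles \<pi> (A \<union> B) = num_cycles \<pi> A + num_cycles \<pi> B"
  unfolding num_cycles_def image_Un
  using assms orb_image_disjoint[OF assms(3-5)] by (simp add: card_Un_disjoint)

lemma num_cycles_mono: "A \<subseteq> B \<Longrightarrow> finite B \<Longrightarrow> num_cycles \<pi> A \<le> num_cycles \<pi> B"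
  unfolding num_cycles_def by (intro card_mono image_mono) auto

definition cycle_walk :: "(nat \<Rightarrow> nat) \<Rightarrow> nat \<Rightarrow> (nat \<Rightarrow> nat list) \<Rightarrow> nat list" where
  "cycle_walk \<pi> s ins = s # concat (map (\<lambda>k. ins ((\<pi> ^^ k) s) @ [(\<pi> ^^ Suc k) s]) [0..<cyc_len \<pi> s])"

lemma path_len_blocks:
  "path_len m1 s (concat (map (\<lambda>k. ins ((\<pi> ^^ k) s) @ [(\<pi> ^^ Suc k) s]) [0..<N]))
     = (\<Sum>k<N. path_len m1 ((\<pi> ^^ k) s) (ins ((\<pi> ^^ k) s))
               + cell_dist m1 (last ((\<pi> ^^ k) s # ins ((\<pi> ^^ k) s))) ((\<pi> ^^ Suc k) s))
   \<and> last (s # concat (map (\<lambda>k. ins ((\<pi> ^^ k) s) @ [(\<pi> ^^ Suc k) s]) [0..<N])) = (\<pi> ^^ N) s"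
  by (induction N) (simp_all add: path_len_append)

context perm_cycle
begin

lemma last_cycle_walk: "last (q # cycle_walk \<pi> s ins) = s"
  using path_len_blocks[of m1 s ins \<pi> "cyc_len \<pi> s"] funpow_cyc_len
  by (simp add: cycle_walk_def)

lemma path_len_cycle_walk:
  "path_len m1 q (cycle_walk \<pi> s ins)
     = cell_dist m1 q s + (\<Sum>a\<in>orb \<pi> s. path_len m1 a (ins a) + cell_dist m1 (last (a # ins a)) (\<pi> a))"
  using path_len_blocks[of m1 s ins \<pi> "cyc_len \<pi> s"] by (simp add: cycle_walk_def sum_orb)

lemma length_cycle_walk:
  "length (cycle_walk \<pi> s ins) = 1 + card (orb \<pi> s) + (\<Sum>a\<in>orb \<pi> s. length (ins a))"
proof -
  have "length (concat (map (\<lambda>k. ins ((\<pi> ^^ k) s) @ [(\<pi> ^^ Suc k) s]) [0..<cyc_len \<pi> s]))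
      = (\<Sum>k<cyc_len \<pi> s. length (ins ((\<pi> ^^ k) s)) + 1)"
    by (simp add: length_concat sum_list_sum_nth atLeast0LessThan)
  then show ?thesis by (simp add: cycle_walk_def sum_Suc sum_orb card_orb)
qed

lemma set_cycle_walk:
  "set (cycle_walk \<pi> s ins) \<subseteq> orb \<pi> s \<union> (\<Union>a\<in>orb \<pi> s. set (ins a))"
  using orb_self funpow_in_orb by (fastforce simp: cycle_walk_def simp del: funpow.simps)

end

text \<open>Here \<open>B\<close> bounds the distance between any two cells. The lower bound carries the distance
  from the entry to the exit cell so that it composes along concatenations by the triangle
  inequality; the upper bound charges \<open>2 B\<close> per cycle, for entering it and for leaving it.\<close>

definition switch_inv :: "(nat \<Rightarrow> nat) \<Rightarrow> nat \<Rightarrow> nat \<Rightarrow> real \<Rightarrow> nat set \<Rightarrow> nat list \<Rightarrow> bool" where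
  "switch_inv \<pi> n m1 B S xs \<longleftrightarrow>
     finite S \<and> S \<subseteq> {1..n} \<and> (\<forall>x\<in>S. orb \<pi> x \<subseteq> S) \<and> set xs \<subseteq> S \<and>
     length xs = card S + num_cycles \<pi> S \<and>
     (\<forall>q. displacement m1 \<pi> S + cell_dist m1 q (last (q # xs)) \<le> path_len m1 q xs) \<and>
     (\<forall>q\<in>{1..n}. xs \<noteq> [] \<longrightarrow>
        path_len m1 q xs + B \<le> displacement m1 \<pi> S + 2 * B * num_cycles \<pi> S)"

lemma switch_invD:
  assumes "switch_inv \<pi> n m1 B S xs"
  shows "finite S" and "S \<subseteq> {1..n}" and "\<forall>x\<in>S. orb \<pi> x \<subseteq> S" and "set xs \<subseteq> S"
    and "length xs = card S + num_cycles \<pi> S"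
    and "displacement m1 \<pi> S + cell_dist m1 q (last (q # xs)) \<le> path_len m1 q xs"
    and "q \<in> {1..n} \<Longrightarrow> xs \<noteq> [] \<Longrightarrow>
           path_len m1 q xs + B \<le> displacement m1 \<pi> S + 2 * B * num_cycles \<pi> S"
  using assms by (simp_all add: switch_inv_def)

lemma switch_inv_last_in:
  assumes "switch_inv \<pi> n m1 B S xs" "q \<in> {1..n}"
  shows "last (q # xs) \<in> {1..n}"
  using switch_invD(2,4)[OF assms(1)] assms(2) by (cases xs rule: rev_cases) auto

lemma switch_inv_Nil: "switch_inv \<pi> n m1 B {} []"
  by (simp add: switch_inv_def displacement_def num_cycles_def)

lemma switch_inv_append:
  assumes xs: "switch_inv \<pi> n m1 B S1 xs" and ys: "switch_inv \<pi> n m1 B S2 ys"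
    and "ys \<noteq> []" "S1 \<inter> S2 = {}" "0 \<le> B"
  shows "switch_inv \<pi> n m1 B (S1 \<union> S2) (xs @ ys)"
proof -
  let ?D = "displacement m1 \<pi>" and ?K = "num_cycles \<pi>"
  note xs' = switch_invD[OF xs] and ys' = switch_invD[OF ys]
  have fin: "finite S1" "finite S2" and closed: "\<forall>x\<in>S1. orb \<pi> x \<subseteq> S1" "\<forall>x\<in>S2. orb \<pi> x \<subseteq> S2"
    using xs'(1,3) ys'(1,3) by simp_all
  have D: "?D (S1 \<union> S2) = ?D S1 + ?D S2" using fin assms(4) by (rule displacement_Un)
  have K: "?K (S1 \<union> S2) = ?K S1 + ?K S2" using fin closed assms(4) by (rule num_cycles_Un)
  have lower: "?D (S1 \<union> S2) + cell_dist m1 q (last (q # xs @ ys)) \<le> path_len m1 q (xs @ ys)" for q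
  proof -
    have "cell_dist m1 q (last (q # xs @ ys))
        \<le> cell_dist m1 q (last (q # xs)) + cell_dist m1 (last (q # xs)) (last (last (q # xs) # ys))"
      using \<open>ys \<noteq> []\<close> by (simp add: l2dist_triangle)
    then show ?thesis
      using xs'(6)[of q] ys'(6)[of "last (q # xs)"] \<open>ys \<noteq> []\<close> D by (simp add: path_len_append)
  qed
  have upper: "path_len m1 q (xs @ ys) + B \<le> ?D (S1 \<union> S2) + 2 * B * ?K (S1 \<union> S2)"
    if q: "q \<in> {1..n}" for q
  proof -
    have "path_len m1 q xs \<le> ?D S1 + 2 * B * ?K S1"
    proof (cases "xs = []")
      case True
      then show ?thesis using \<open>0 \<le> B\<close> displacement_nonneg[of m1 \<pi> S1] by simp
    next
      case False
      then show ?thesis using xs'(7)[OF q] \<open>0 \<le> B\<close> by simp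
    qed
    moreover have "path_len m1 (last (q # xs)) ys + B \<le> ?D S2 + 2 * B * ?K S2"
      using ys'(7)[OF switch_inv_last_in[OF xs q] \<open>ys \<noteq> []\<close>] .
    moreover have "2 * B * ?K (S1 \<union> S2) = 2 * B * ?K S1 + 2 * B * ?K S2"
      using K by (simp add: distrib_left)
    ultimately show ?thesis unfolding path_len_append D by linarith
  qed
  show ?thesis
    unfolding switch_inv_def using xs' ys' lower upper D K fin assms(4) by (auto simp: card_Un_disjoint)
qed

text \<open>The premises of rule \<open>swc_cycle\<close>, with the invariant holding for the inserted groups.\<close>

locale switch_cycle =
  fixes \<pi> :: "nat \<Rightarrow> nat" and s n m1 :: nat and B :: real
    and T :: "nat \<Rightarrow> nat set" and ins :: "nat \<Rightarrow> nat list"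
  assumes permutes: "\<pi> permutes {1..n}" and moved: "\<pi> s \<noteq> s"
    and B_nonneg: "0 \<le> B" and cell_dist_le_B: "\<And>i j. i \<in> {1..n} \<Longrightarrow> j \<in> {1..n} \<Longrightarrow> cell_dist m1 i j \<le> B"
    and inv: "\<And>a. a \<in> orb \<pi> s \<Longrightarrow> switch_inv \<pi> n m1 B (T a) (ins a)"
    and disjoint_orb: "\<And>a. a \<in> orb \<pi> s \<Longrightarrow> T a \<inter> orb \<pi> s = {}"
    and disjoint: "\<And>a b. a \<in> orb \<pi> s \<Longrightarrow> b \<in> orb \<pi> s \<Longrightarrow> a \<noteq> b \<Longrightarrow> T a \<inter> T b = {}"
begin

sublocale perm_cycle \<pi> s
  using permutes by unfold_locales (rule permutation_if_permutes_interval)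

abbreviation S :: "nat set" where
  "S \<equiv> orb \<pi> s \<union> (\<Union>a\<in>orb \<pi> s. T a)"

lemma s_in: "s \<in> {1..n}"
  using moved permutes_not_in[OF permutes] by blast

lemma orb_subset: "orb \<pi> s \<subseteq> {1..n}"
  using orb_subset_permutes[OF permutes s_in] .

lemmas invD = switch_invD[OF inv]

lemma finite_T: "a \<in> orb \<pi> s \<Longrightarrow> finite (T a)"
  by (rule invD(1))

lemma closed_T: "a \<in> orb \<pi> s \<Longrightarrow> \<forall>x\<in>T a. orb \<pi> x \<subseteq> T a"
  by (rule invD(3))

lemma finite_S: "finite S"
  using finite_orb[OF permutation] finite_T by blast

lemma S_closed: "\<forall>x\<in>S. orb \<pi> x \<subseteq> S"
  using orb_eq[OF permutation] closed_T by blast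

lemma S_subset: "S \<subseteq> {1..n}"
  using orb_subset invD(2) by blast

lemma set_walk_subset: "set (cycle_walk \<pi> s ins) \<subseteq> S"
  using set_cycle_walk invD(4) by blast

lemma disjoint_Union: "orb \<pi> s \<inter> (\<Union>a\<in>orb \<pi> s. T a) = {}"
  using disjoint_orb by blast

lemma card_S: "card S = card (orb \<pi> s) + (\<Sum>a\<in>orb \<pi> s. card (T a))"
  using finite_orb[OF permutation] finite_T disjoint_Union disjoint
  by (simp add: card_Un_disjoint card_UN_disjoint)

lemma displacement_S:
  "displacement m1 \<pi> S = (\<Sum>a\<in>orb \<pi> s. cell_dist m1 a (\<pi> a) + displacement m1 \<pi> (T a))"
proof -
  have "displacement m1 \<pi> S = displacement m1 \<pi> (orb \<pi> s) + displacement m1 \<pi> (\<Union>a\<in>orb \<pi> s. T a)"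
    using finite_orb[OF permutation] finite_T disjoint_Union by (intro displacement_Un) auto
  also have "displacement m1 \<pi> (\<Union>a\<in>orb \<pi> s. T a) = (\<Sum>a\<in>orb \<pi> s. displacement m1 \<pi> (T a))"
    unfolding displacement_def using finite_orb[OF permutation] finite_T disjoint
    by (intro sum.UNION_disjoint) auto
  finally show ?thesis by (simp add: displacement_def sum.distrib)
qed

lemma num_cycles_S: "num_cycles \<pi> S = 1 + (\<Sum>a\<in>orb \<pi> s. num_cycles \<pi> (T a))"
proof -
  have orb_S: "orb \<pi> ` S = insert (orb \<pi> s) (\<Union>a\<in>orb \<pi> s. orb \<pi> ` T a)"
    using orb_eq[OF permutation] orb_self by auto
  have "orb \<pi> s \<notin> (\<Union>a\<in>orb \<pi> s. orb \<pi> ` T a)"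
    using disjoint_orb orb_self by fastforce
  moreover have "card (\<Union>a\<in>orb \<pi> s. orb \<pi> ` T a) = (\<Sum>a\<in>orb \<pi> s. num_cycles \<pi> (T a))"
    unfolding num_cycles_def
    using finite_orb[OF permutation] finite_T orb_image_disjoint[OF closed_T closed_T disjoint]
    by (intro card_UN_disjoint) auto
  ultimately show ?thesis
    unfolding orb_S num_cycles_def using finite_orb[OF permutation] finite_T by simp
qed

lemma length_walk: "length (cycle_walk \<pi> s ins) = card S + num_cycles \<pi> S"
  using invD(5) by (simp add: length_cycle_walk card_S num_cycles_S sum.distrib)

lemma walk_lower:
  "displacement m1 \<pi> S + cell_dist m1 q (last (q # cycle_walk \<pi> s ins)) \<le> path_len m1 q (cycle_walk \<pi> s ins)"
proof -
  have "cell_dist m1 a (\<pi> a) + displacement m1 \<pi> (T a)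
      \<le> path_len m1 a (ins a) + cell_dist m1 (last (a # ins a)) (\<pi> a)" if "a \<in> orb \<pi> s" for a
    using invD(6)[OF that, of a] l2dist_triangle[of "loc m1 a" "loc m1 (\<pi> a)" "loc m1 (last (a # ins a))"]
    by linarith
  then show ?thesis
    unfolding path_len_cycle_walk last_cycle_walk displacement_S by (simp add: sum_mono)
qed

text \<open>Each inserted group pays its own cycles plus the detour back to \<open>\<pi> a\<close>, which is
  absorbed by its spare \<open>B\<close>.\<close>

lemma walk_step_upper:
  assumes a: "a \<in> orb \<pi> s"
  shows "path_len m1 a (ins a) + cell_dist m1 (last (a # ins a)) (\<pi> a)
           \<le> cell_dist m1 a (\<pi> a) + displacement m1 \<pi> (T a) + 2 * B * num_cycles \<pi> (T a)"
proof (cases "ins a = []")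
  case True
  have "0 \<le> 2 * B * num_cycles \<pi> (T a)" using B_nonneg by simp
  then show ?thesis using True displacement_nonneg[of m1 \<pi> "T a"] by simp
next
  case False
  have a_in: "a \<in> {1..n}" and "\<pi> a \<in> {1..n}" using a apply_in_orb orb_subset by blast+
  then have "cell_dist m1 (last (a # ins a)) (\<pi> a) \<le> B"
    using cell_dist_le_B switch_inv_last_in[OF inv[OF a] a_in] by blast
  then show ?thesis
    using invD(7)[OF a a_in False] l2dist_nonneg[of "loc m1 a" "loc m1 (\<pi> a)"] by linarith
qed

lemma walk_upper:
  assumes q: "q \<in> {1..n}"
  shows "path_len m1 q (cycle_walk \<pi> s ins) + B \<le> displacement m1 \<pi> S + 2 * B * num_cycles \<pi> S"
proof -
  have "(\<Sum>a\<in>orb \<pi> s. path_len m1 a (ins a) + cell_dist m1 (last (a # ins a)) (\<pi> a))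
      \<le> (\<Sum>a\<in>orb \<pi> s. cell_dist m1 a (\<pi> a) + displacement m1 \<pi> (T a) + 2 * B * num_cycles \<pi> (T a))"
    by (rule sum_mono) (rule walk_step_upper)
  also have "\<dots> = displacement m1 \<pi> S + 2 * B * num_cycles \<pi> S - 2 * B"
    unfolding displacement_S num_cycles_S by (simp add: sum.distrib sum_distrib_left algebra_simps)
  finally show ?thesis
    unfolding path_len_cycle_walk using cell_dist_le_B[OF q s_in] by linarith
qed

lemma switch_inv_walk: "switch_inv \<pi> n m1 B S (cycle_walk \<pi> s ins)"
  unfolding switch_inv_def
  using finite_S S_subset S_closed set_walk_subset length_walk walk_lower walk_upper by blast

end

lemma swc_nonempty: "swc \<pi> S xs \<Longrightarrow> xs \<noteq> []"
  by (induction rule: swc.cases) auto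

lemma switch_inv:
  assumes "\<pi> permutes {1..n}" "0 \<le> B" "\<And>i j. i \<in> {1..n} \<Longrightarrow> j \<in> {1..n} \<Longrightarrow> cell_dist m1 i j \<le> B"
  shows "swc \<pi> S xs \<Longrightarrow> switch_inv \<pi> n m1 B S xs"
    and "swseq \<pi> S xs \<Longrightarrow> switch_inv \<pi> n m1 B S xs"
proof (induction rule: swc_swseq.inducts)
  case swseq_nil
  show ?case by (rule switch_inv_Nil)
next
  case (swseq_snoc S1 xs S2 ys)
  then show ?case using assms(2) swc_nonempty by (blast intro: switch_inv_append)
next
  case (swc_cycle s T ins)
  interpret switch_cycle \<pi> s n m1 B T ins
    using assms swc_cycle by unfold_locales blast+
  show ?case using switch_inv_walk by (simp add: cycle_walk_def)
qed

definition cost_lower :: "real \<Rightarrow> real \<Rightarrow> nat \<Rightarrow> nat \<Rightarrow> (nat \<Rightarrow> nat) \<Rightarrow> real" where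
  "cost_lower cp ct m1 n \<pi> = cp * card (nontriv n \<pi>) + ct * displacement m1 \<pi> {1..n}"

text \<open>One extra pick-n-swap and two lattice diameters of travel per cycle, plus the return to the
  rest position.\<close>

definition cost_slack :: "real \<Rightarrow> real \<Rightarrow> nat \<Rightarrow> nat \<Rightarrow> (nat \<Rightarrow> nat) \<Rightarrow> real" where
  "cost_slack cp ct m1 m2 \<pi> =
     (cp + 2 * ct * real (m1 + m2)) * num_cycles \<pi> {1..m1 * m2} + ct * real (m1 + m2)"

lemma displacement_nontriv: "displacement m1 \<pi> (nontriv n \<pi>) = displacement m1 \<pi> {1..n}"
  unfolding displacement_def by (rule sum.mono_neutral_left) (auto simp: nontriv_def)

lemma switch_plan_cost_bounds:
  assumes perm: "\<pi> permutes {1..m1 * m2}" and P: "P \<in> switch_plans (m1 * m2) \<pi>"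
    and cp: "0 \<le> cp" and ct: "0 \<le> ct"
  shows "cost_lower cp ct m1 (m1 * m2) \<pi> \<le> JT cp ct m1 P"
    and "JT cp ct m1 P \<le> cost_lower cp ct m1 (m1 * m2) \<pi> + cost_slack cp ct m1 m2 \<pi>"
proof -
  let ?n = "m1 * m2" and ?B = "real (m1 + m2)" and ?N = "nontriv (m1 * m2) \<pi>"
  let ?K = "num_cycles \<pi> ?N" and ?C = "num_cycles \<pi> {1..?n}"
  have inv: "switch_inv \<pi> ?n m1 ?B ?N P"
    using P switch_inv(2)[OF perm _ cell_dist_le] by (simp add: switch_plans_def)
  note I = switch_invD[OF inv]
  have K_le: "?K \<le> ?C" by (rule num_cycles_mono) (auto simp: nontriv_def)
  have travel_lower: "displacement m1 \<pi> {1..?n} \<le> path_len m1 1 P + cell_dist m1 (last (1 # P)) 1"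
    using I(6)[of 1] l2dist_nonneg[of "loc m1 1" "loc m1 (last (1 # P))"]
      l2dist_nonneg[of "loc m1 (last (1 # P))" "loc m1 1"]
    by (simp add: displacement_nontriv)
  have travel_upper: "path_len m1 1 P + cell_dist m1 (last (1 # P)) 1
      \<le> displacement m1 \<pi> {1..?n} + (2 * ?K + 1) * ?B"
  proof (cases "P = []")
    case True
    then show ?thesis using displacement_nonneg[of m1 \<pi> "{1..?n}"] by simp
  next
    case False
    then have "hd P \<in> {1..?n}" using I(2,4) hd_in_set[OF False] by blast
    then have one: "1 \<in> {1..?n}" by (simp only: atLeastAtMost_iff) linarith
    have "cell_dist m1 (last (1 # P)) 1 \<le> ?B"
      using cell_dist_le switch_inv_last_in[OF inv one] one by blast
    then show ?thesis using I(7)[OF one False] by (simp add: displacement_nontriv algebra_simps)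
  qed
  have len: "real (length P) = card ?N + ?K" using I(5) by simp
  show "cost_lower cp ct m1 ?n \<pi> \<le> JT cp ct m1 P"
    unfolding JT_eq_path_len cost_lower_def len
    using mult_left_mono[OF travel_lower ct] mult_nonneg_nonneg[OF cp, of ?K]
    by (simp add: algebra_simps split del: if_split)
  have "JT cp ct m1 P \<le> cost_lower cp ct m1 ?n \<pi> + cp * ?K + ct * ((2 * ?K + 1) * ?B)"
    unfolding JT_eq_path_len cost_lower_def len
    using mult_left_mono[OF travel_upper ct] by (simp add: algebra_simps)
  also have "\<dots> \<le> cost_lower cp ct m1 ?n \<pi> + cost_slack cp ct m1 m2 \<pi>"
    unfolding cost_slack_def using K_le cp ct
    by (simp add: algebra_simps add_mono mult_left_mono)
  finally show "JT cp ct m1 P \<le> cost_lower cp ct m1 ?n \<pi> + cost_slack cp ct m1 m2 \<pi>" .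
qed

lemma cyc_follow_swc: "\<pi> s \<noteq> s \<Longrightarrow> swc \<pi> (orb \<pi> s) (cyc_follow \<pi> s)"
  using swc_cycle[of \<pi> s "\<lambda>_. {}" "\<lambda>_. []"] swseq_nil
  by (simp add: cyc_follow_def)

lemma sweep_swseq:
  assumes "\<pi> permutes {1..n}"
  shows "\<forall>s\<in>set starts. \<pi> s \<noteq> s \<Longrightarrow> distinct (map (orb \<pi>) starts)
     \<Longrightarrow> swseq \<pi> (\<Union> (orb \<pi> ` set starts)) (concat (map (cyc_follow \<pi>) starts))"
proof (induction starts rule: rev_induct)
  case Nil
  then show ?case using swseq_nil by simp
next
  case (snoc t ts)
  have "orb \<pi> x \<noteq> orb \<pi> t" if "x \<in> set ts" for x
    using snoc.prems(2) that by auto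
  then have "\<Union> (orb \<pi> ` set ts) \<inter> orb \<pi> t = {}"
    using orb_disjoint[OF permutation_if_permutes_interval[OF assms]] by blast
  then have "swseq \<pi> (\<Union> (orb \<pi> ` set ts) \<union> orb \<pi> t) (concat (map (cyc_follow \<pi>) ts) @ cyc_follow \<pi> t)"
    using snoc by (intro swseq_snoc cyc_follow_swc) auto
  then show ?case by (simp add: Un_commute)
qed

lemma sweep_plans_subset_switch_plans:
  assumes "\<pi> permutes {1..n}"
  shows "sweep_plans n \<pi> \<subseteq> switch_plans n \<pi>"
proof
  fix P assume "P \<in> sweep_plans n \<pi>"
  then obtain starts where P: "P = concat (map (cyc_follow \<pi>) starts)"
    and moved: "\<forall>s\<in>set starts. \<pi> s \<noteq> s" and distinct: "distinct (map (orb \<pi>) starts)"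
    and cover: "orb \<pi> ` set starts = orb \<pi> ` nontriv n \<pi>"
    unfolding sweep_plans_def by auto
  have "swseq \<pi> (\<Union> (orb \<pi> ` set starts)) P" unfolding P by (rule sweep_swseq[OF assms moved distinct])
  then show "P \<in> switch_plans n \<pi>"
    using cover union_orb_nontriv[OF assms] by (simp add: switch_plans_def)
qed

section \<open>Executing sweep plans\<close>

definition settled :: "nat \<Rightarrow> (nat \<Rightarrow> nat) \<Rightarrow> (nat \<Rightarrow> nat option) \<times> nat option" where
  "settled n \<sigma> = (init_arr n \<sigma>, None)"

definition holding :: "nat \<Rightarrow> (nat \<Rightarrow> nat) \<Rightarrow> nat \<Rightarrow> (nat \<Rightarrow> nat option) \<times> nat option" where
  "holding n \<sigma> h = ((init_arr n \<sigma>)(h := None), Some (\<sigma> h))"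

definition fix_on :: "(nat \<Rightarrow> nat) \<Rightarrow> nat set \<Rightarrow> nat \<Rightarrow> nat" where
  "fix_on \<sigma> A = (\<lambda>c. if c \<in> A then c else \<sigma> c)"

lemma run_Nil [simp]: "run st [] = st"
  by (simp add: run_def)

lemma run_Cons [simp]: "run st (x # xs) = run (pns st x) xs"
  by (simp add: run_def)

lemma run_append [simp]: "run st (xs @ ys) = run (run st xs) ys"
  by (simp add: run_def)

lemma pns_settled: "h \<in> {1..n} \<Longrightarrow> pns (settled n \<sigma>) h = holding n \<sigma> h"
  by (simp add: pns_def settled_def holding_def init_arr_def)

lemma pns_holding:
  "x \<in> {1..n} \<Longrightarrow> x \<noteq> h \<Longrightarrow> pns (holding n \<tau> h) x = holding n (\<tau>(x := \<tau> h, h := \<tau> x)) h"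
  by (auto simp: pns_def holding_def init_arr_def fun_eq_iff)

lemma pns_holding_self: "h \<in> {1..n} \<Longrightarrow> \<tau> h = h \<Longrightarrow> pns (holding n \<tau> h) h = settled n \<tau>"
  by (auto simp: pns_def holding_def settled_def init_arr_def fun_eq_iff)

text \<open>After the swaps at the first \<open>k\<close> successors of \<open>s\<close> these cells hold their own items and
  the held item is \<open>(\<pi> ^^ Suc k) s\<close>; the state is encoded as \<open>holding\<close> with the held item
  recorded as the content of the empty cell \<open>s\<close>.\<close>

lemma (in perm_cycle) run_cycle_prefix:
  assumes perm: "\<pi> permutes {1..n}" and s: "s \<in> {1..n}" and k: "k < cyc_len \<pi> s"
  shows "run (holding n \<pi> s) (map (\<lambda>i. (\<pi> ^^ i) s) [1..<Suc k])
           = holding n ((fix_on \<pi> ((\<lambda>i. (\<pi> ^^ i) s) ` {1..k}))(s := (\<pi> ^^ Suc k) s)) s"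
proof -
  let ?a = "\<lambda>i. (\<pi> ^^ i) s"
  define \<tau> where "\<tau> j = (fix_on \<pi> (?a ` {1..j}))(s := ?a (Suc j))" for j
  have a_inj: "i = j" if "?a i = ?a j" "i < cyc_len \<pi> s" "j < cyc_len \<pi> s" for i j
    using inj_onD[OF inj_on_funpow that(1)] that(2,3) by simp
  have "run (holding n \<pi> s) (map ?a [1..<Suc k]) = holding n (\<tau> k) s"
    using k
  proof (induction k)
    case 0
    then show ?case by (simp add: \<tau>_def fix_on_def)
  next
    case (Suc k)
    let ?x = "?a (Suc k)"
    have x_in: "?x \<in> {1..n}" using orb_subset_permutes[OF perm s] funpow_in_orb by blast
    have x_s: "?x \<noteq> s" using a_inj[of "Suc k" 0] Suc.prems by auto
    have x_new: "?x \<notin> ?a ` {1..k}"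
    proof
      assume "?x \<in> ?a ` {1..k}"
      then obtain i where "i \<in> {1..k}" "?x = ?a i" by blast
      then show False using a_inj[of "Suc k" i] Suc.prems by auto
    qed
    have "run (holding n \<pi> s) (map ?a [1..<Suc (Suc k)]) = pns (holding n (\<tau> k) s) ?x"
      using Suc by simp
    also have "\<dots> = holding n ((\<tau> k)(?x := \<tau> k s, s := \<tau> k ?x)) s"
      by (rule pns_holding[OF x_in x_s])
    also have "(\<tau> k)(?x := \<tau> k s, s := \<tau> k ?x) = \<tau> (Suc k)"
      using x_s x_new by (auto simp: \<tau>_def fix_on_def fun_eq_iff atLeastAtMostSuc_conv)
    finally show ?case .
  qed
  then show ?thesis by (simp add: \<tau>_def)
qed

lemma run_cyc_follow:
  assumes perm: "\<sigma> permutes {1..n}" and s: "s \<in> {1..n}"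
  shows "run (settled n \<sigma>) (cyc_follow \<sigma> s) = settled n (fix_on \<sigma> (orb \<sigma> s))"
proof -
  interpret perm_cycle \<sigma> s
    using perm by unfold_locales (rule permutation_if_permutes_interval)
  let ?a = "\<lambda>i. (\<sigma> ^^ i) s" and ?L = "cyc_len \<sigma> s"
  have L: "?L - 1 < ?L" "Suc (?L - 1) = ?L" using cyc_len_pos by auto
  have "map (\<lambda>k. ?a (Suc k)) [0..<?L] = map ?a [1..<Suc ?L]"
    by (simp only: map_Suc_upt[symmetric] map_map comp_def One_nat_def)
  also have "\<dots> = map ?a [1..<?L] @ [s]"
    using cyc_len_pos funpow_cyc_len by simp
  finally have "cyc_follow \<sigma> s = s # map ?a [1..<?L] @ [s]"
    by (simp add: cyc_follow_def)
  moreover have "(fix_on \<sigma> (?a ` {1..?L - 1}))(s := s) = fix_on \<sigma> (orb \<sigma> s)"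
  proof -
    have "{0..<?L} = insert 0 {1..?L - 1}" using L by auto
    then have "orb \<sigma> s = insert s (?a ` {1..?L - 1})" using image_funpow by auto
    then show ?thesis by (auto simp: fix_on_def fun_eq_iff)
  qed
  moreover have "fix_on \<sigma> (orb \<sigma> s) s = s" by (simp add: fix_on_def orb_self)
  ultimately show ?thesis
    using run_cycle_prefix[OF perm s L(1)] L(2) funpow_cyc_len
    by (simp add: pns_settled[OF s] pns_holding_self[OF s])
qed

lemma fix_on_orb_permutes:
  assumes "\<sigma> permutes S" "finite S"
  shows "fix_on \<sigma> (orb \<sigma> t) permutes S"
proof -
  have orb: "orb \<sigma> t = orbit \<sigma> t"
    using assms by (simp add: orb_eq_orbit permutes_imp_permutation)
  have "fix_on \<sigma> (orb \<sigma> t) = perm_restrict \<sigma> (S - orbit \<sigma> t)"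
    using permutes_not_in[OF assms(1)] by (auto simp: fix_on_def perm_restrict_def orb fun_eq_iff)
  moreover have "perm_restrict \<sigma> (S - orbit \<sigma> t) permutes (S - orbit \<sigma> t)"
    using perm_restrict_diff_cyclic[OF assms(1) cyclic_on_orbit[OF assms]] .
  ultimately show ?thesis by (auto intro: permutes_subset)
qed

lemma fix_on_fix_on: "fix_on (fix_on \<sigma> A) B = fix_on \<sigma> (A \<union> B)"
  by (auto simp: fix_on_def fun_eq_iff)

lemma run_sweep:
  "\<sigma> permutes {1..n} \<Longrightarrow> set starts \<subseteq> {1..n} \<Longrightarrow> distinct (map (orb \<sigma>) starts) \<Longrightarrow>
   run (settled n \<sigma>) (concat (map (cyc_follow \<sigma>) starts)) = settled n (fix_on \<sigma> (\<Union> (orb \<sigma> ` set starts)))"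
proof (induction starts arbitrary: \<sigma>)
  case Nil
  then show ?case by (simp add: fix_on_def)
next
  case (Cons t ts)
  define \<sigma>' where "\<sigma>' = fix_on \<sigma> (orb \<sigma> t)"
  have perm': "\<sigma>' permutes {1..n}" unfolding \<sigma>'_def using Cons.prems(1) by (rule fix_on_orb_permutes) simp
  have disjoint: "orb \<sigma> t' \<inter> orb \<sigma> t = {}" if "t' \<in> set ts" for t'
  proof (rule orb_disjoint)
    show "permutation \<sigma>" using Cons.prems(1) by (rule permutation_if_permutes_interval)
    show "orb \<sigma> t' \<noteq> orb \<sigma> t" using Cons.prems(3) that by auto
  qed
  have agree: "\<forall>x\<in>orb \<sigma> t'. \<sigma>' x = \<sigma> x" if "t' \<in> set ts" for t'
    using disjoint[OF that] by (auto simp: \<sigma>'_def fix_on_def)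
  have follow: "map (cyc_follow \<sigma>') ts = map (cyc_follow \<sigma>) ts"
    by (rule map_cong[OF refl]) (rule orb_cong(3)[OF agree])
  have orbs: "map (orb \<sigma>') ts = map (orb \<sigma>) ts"
    by (rule map_cong[OF refl]) (rule orb_cong(1)[OF agree])
  have "run (settled n \<sigma>) (concat (map (cyc_follow \<sigma>) (t # ts)))
      = run (run (settled n \<sigma>) (cyc_follow \<sigma> t)) (concat (map (cyc_follow \<sigma>) ts))"
    by simp
  also have "run (settled n \<sigma>) (cyc_follow \<sigma> t) = settled n \<sigma>'"
    unfolding \<sigma>'_def using Cons.prems(1,2) by (intro run_cyc_follow) auto
  also have "run (settled n \<sigma>') (concat (map (cyc_follow \<sigma>) ts))
      = settled n (fix_on \<sigma>' (\<Union> (orb \<sigma>' ` set ts)))"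
    using Cons.IH[OF perm'] Cons.prems(2,3) follow orbs by simp
  also have "\<Union> (orb \<sigma>' ` set ts) = \<Union> (orb \<sigma> ` set ts)"
    using orbs by (metis set_map)
  finally show ?case by (simp add: \<sigma>'_def fix_on_fix_on)
qed

lemma set_cyc_follow: "set (cyc_follow \<pi> s) \<subseteq> orb \<pi> s"
  unfolding cyc_follow_def using orb_self funpow_in_orb by (auto simp del: funpow.simps)

lemma exists_cycle_representatives:
  assumes perm: "\<pi> permutes {1..n}"
  obtains starts where "set starts \<subseteq> nontriv n \<pi>" "distinct (map (orb \<pi>) starts)"
    "orb \<pi> ` set starts = orb \<pi> ` nontriv n \<pi>"
proof -
  have pm: "permutation \<pi>" using perm by (rule permutation_if_permutes_interval)
  obtain Cs where Cs: "set Cs = orb \<pi> ` nontriv n \<pi>" "distinct Cs"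
    using finite_distinct_list[of "orb \<pi> ` nontriv n \<pi>"] by (auto simp: nontriv_def)
  have start: "Min C \<in> nontriv n \<pi>" "orb \<pi> (Min C) = C" if C: "C \<in> set Cs" for C
  proof -
    obtain t where t: "t \<in> nontriv n \<pi>" "C = orb \<pi> t" using C Cs(1) by auto
    have "Min C \<in> C" using t finite_orb[OF pm] orb_self by (intro Min_in) auto
    then show "orb \<pi> (Min C) = C" and "Min C \<in> nontriv n \<pi>"
      using t orb_eq[OF pm] nontriv_orb_closed[OF perm t(1)] by simp_all
  qed
  then have orbs: "map (orb \<pi>) (map Min Cs) = Cs" by (simp add: map_idI)
  show thesis
  proof (rule that)
    show "set (map Min Cs) \<subseteq> nontriv n \<pi>" using start(1) by auto
    show "distinct (map (orb \<pi>) (map Min Cs))" using orbs Cs(2) by simp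
    show "orb \<pi> ` set (map Min Cs) = orb \<pi> ` nontriv n \<pi>" using orbs Cs(1) by (metis set_map)
  qed
qed

lemma exists_valid_sweep_plan:
  assumes perm: "\<pi> permutes {1..n}"
  shows "\<exists>P\<in>sweep_plans n \<pi>. valid_plan n \<pi> P"
proof -
  obtain starts where starts: "set starts \<subseteq> nontriv n \<pi>" "distinct (map (orb \<pi>) starts)"
    and cover: "orb \<pi> ` set starts = orb \<pi> ` nontriv n \<pi>"
    using exists_cycle_representatives[OF perm] .
  have starts_in: "set starts \<subseteq> {1..n}" using starts(1) by (auto simp: nontriv_def)
  have covered: "\<Union> (orb \<pi> ` set starts) = nontriv n \<pi>"
    using cover union_orb_nontriv[OF perm] by simp
  define P where "P = concat (map (cyc_follow \<pi>) starts)"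
  have "P \<in> sweep_plans n \<pi>"
    unfolding sweep_plans_def P_def using starts cover by (auto simp: nontriv_def)
  moreover have "set P \<subseteq> {1..n}"
    using set_cyc_follow covered by (fastforce simp: P_def nontriv_def)
  moreover have "run (settled n \<pi>) P = settled n (fix_on \<pi> (nontriv n \<pi>))"
    using run_sweep[OF perm starts_in starts(2)] covered by (simp add: P_def)
  moreover have "settled n (fix_on \<pi> (nontriv n \<pi>)) = (goal_arr n, None)"
    by (auto simp: settled_def init_arr_def goal_arr_def fix_on_def nontriv_def fun_eq_iff)
  ultimately show ?thesis by (auto simp: valid_plan_def settled_def)
qed

section \<open>A lower bound for every valid plan\<close>

definition item_dist :: "nat \<Rightarrow> nat \<Rightarrow> nat option \<Rightarrow> real" where
  "item_dist m1 c v = (case v of None \<Rightarrow> 0 | Some j \<Rightarrow> cell_dist m1 c j)"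

text \<open>Total distance of all items from their goals, the held one counted from the
  end-effector at \<open>q\<close>. A pick-n-swap at \<open>q\<close> leaves it unchanged, and moving the end-effector
  changes it by at most the distance travelled.\<close>

definition potential :: "nat \<Rightarrow> nat \<Rightarrow> (nat \<Rightarrow> nat option) \<times> nat option \<Rightarrow> nat \<Rightarrow> real" where
  "potential n m1 st q = (\<Sum>c\<in>{1..n}. item_dist m1 c (fst st c)) + item_dist m1 q (snd st)"

lemma potential_pns:
  assumes "p \<in> {1..n}"
  shows "potential n m1 (pns st p) p = potential n m1 st p"
proof -
  have "(\<Sum>c\<in>{1..n}. item_dist m1 c (((fst st)(p := snd st)) c))
      = item_dist m1 p (snd st) + (\<Sum>c\<in>{1..n} - {p}. item_dist m1 c (fst st c))"
    and "(\<Sum>c\<in>{1..n}. item_dist m1 c (fst st c))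
      = item_dist m1 p (fst st p) + (\<Sum>c\<in>{1..n} - {p}. item_dist m1 c (fst st c))"
    using sum.remove[OF finite_atLeastAtMost assms, of "\<lambda>c. item_dist m1 c (((fst st)(p := snd st)) c)"]
      sum.remove[OF finite_atLeastAtMost assms, of "\<lambda>c. item_dist m1 c (fst st c)"]
    by simp_all
  then show ?thesis by (simp add: potential_def pns_def)
qed

lemma potential_move: "potential n m1 st q \<le> potential n m1 st p + cell_dist m1 q p"
proof (cases "snd st")
  case None
  then show ?thesis by (simp add: potential_def item_dist_def l2dist_nonneg)
next
  case (Some j)
  then show ?thesis
    using l2dist_triangle[of "loc m1 q" "loc m1 j" "loc m1 p"] by (simp add: potential_def item_dist_def)
qed

lemma potential_run:
  "set P \<subseteq> {1..n} \<Longrightarrow> potential n m1 st q \<le> path_len m1 q P + potential n m1 (run st P) (last (q # P))"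
proof (induction P arbitrary: st q)
  case Nil
  then show ?case by simp
next
  case (Cons p P)
  then have "potential n m1 (pns st p) p \<le> path_len m1 p P + potential n m1 (run (pns st p) P) (last (p # P))"
    by simp
  then show ?case
    using potential_move[of n m1 st q p] potential_pns[of p n m1 st] Cons.prems by simp
qed

lemma run_untouched: "c \<notin> set P \<Longrightarrow> fst (run st P) c = fst st c"
  by (induction P arbitrary: st) (auto simp: pns_def)

lemma valid_plan_cost_lower:
  assumes valid: "valid_plan (m1 * m2) \<pi> P" and cp: "0 \<le> cp" and ct: "0 \<le> ct"
  shows "cost_lower cp ct m1 (m1 * m2) \<pi> \<le> JT cp ct m1 P"
proof -
  let ?n = "m1 * m2"
  have set: "set P \<subseteq> {1..?n}" and run: "run (init_arr ?n \<pi>, None) P = (goal_arr ?n, None)"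
    using valid by (auto simp: valid_plan_def)
  have "potential ?n m1 (init_arr ?n \<pi>, None) 1
      \<le> path_len m1 1 P + potential ?n m1 (goal_arr ?n, None) (last (1 # P))"
    using potential_run[OF set, of m1 "(init_arr ?n \<pi>, None)" 1] run by simp
  then have travel: "displacement m1 \<pi> {1..?n} \<le> path_len m1 1 P + cell_dist m1 (last (1 # P)) 1"
    using l2dist_nonneg[of "loc m1 (last (1 # P))" "loc m1 1"]
    by (simp add: potential_def item_dist_def init_arr_def goal_arr_def displacement_def)
  have "nontriv ?n \<pi> \<subseteq> set P"
  proof
    fix c assume c: "c \<in> nontriv ?n \<pi>"
    show "c \<in> set P"
    proof (rule ccontr)
      assume "c \<notin> set P"
      then have "goal_arr ?n c = init_arr ?n \<pi> c" using run_untouched[of c P "(init_arr ?n \<pi>, None)"] run by simp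
      then show False using c by (simp add: nontriv_def goal_arr_def init_arr_def)
    qed
  qed
  then have "card (nontriv ?n \<pi>) \<le> length P"
    using card_mono[of "set P"] card_length[of P] by (meson List.finite_set order_trans)
  then show ?thesis
    unfolding JT_eq_path_len cost_lower_def
    using mult_left_mono[OF travel ct] mult_right_mono[of "real (card (nontriv ?n \<pi>))" "real (length P)" cp] cp
    by (simp add: algebra_simps)
qed

lemma Jopt_cost_bounds:
  assumes perm: "\<pi> permutes {1..m1 * m2}" and cp: "0 \<le> cp" and ct: "0 \<le> ct"
  shows "cost_lower cp ct m1 (m1 * m2) \<pi> \<le> Jopt cp ct m1 m2 \<pi>"
    and "Jopt cp ct m1 m2 \<pi> \<le> cost_lower cp ct m1 (m1 * m2) \<pi> + cost_slack cp ct m1 m2 \<pi>"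
proof -
  let ?J = "JT cp ct m1 ` {P. valid_plan (m1 * m2) \<pi> P}"
  obtain P where P: "P \<in> sweep_plans (m1 * m2) \<pi>" "valid_plan (m1 * m2) \<pi> P"
    using exists_valid_sweep_plan[OF perm] by blast
  have lower: "\<forall>x\<in>?J. cost_lower cp ct m1 (m1 * m2) \<pi> \<le> x"
    using valid_plan_cost_lower[OF _ cp ct] by blast
  show "cost_lower cp ct m1 (m1 * m2) \<pi> \<le> Jopt cp ct m1 m2 \<pi>"
    unfolding Jopt_def using P(2) lower by (intro cInf_greatest) auto
  have "Jopt cp ct m1 m2 \<pi> \<le> JT cp ct m1 P"
    unfolding Jopt_def using P(2) lower by (intro cInf_lower bdd_belowI) auto
  also have "\<dots> \<le> cost_lower cp ct m1 (m1 * m2) \<pi> + cost_slack cp ct m1 m2 \<pi>"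
    using switch_plan_cost_bounds(2)[OF perm _ cp ct] sweep_plans_subset_switch_plans[OF perm] P(1) by blast
  finally show "Jopt cp ct m1 m2 \<pi> \<le> cost_lower cp ct m1 (m1 * m2) \<pi> + cost_slack cp ct m1 m2 \<pi>" .
qed

section \<open>Expectations over a random permutation\<close>

lemma card_permutes_interval: "card {\<pi>. \<pi> permutes {1..n}} = fact n"
  using card_permutations[of "{1..n}" n] by simp

lemma E_perm_mono: "(\<And>\<pi>. \<pi> permutes {1..n} \<Longrightarrow> f \<pi> \<le> g \<pi>) \<Longrightarrow> E_perm n f \<le> E_perm n g"
  unfolding E_perm_def by (intro divide_right_mono sum_mono) auto

lemma E_perm_add: "E_perm n (\<lambda>\<pi>. f \<pi> + g \<pi>) = E_perm n f + E_perm n g"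
  unfolding E_perm_def by (simp add: sum.distrib add_divide_distrib)

lemma E_perm_cmult: "E_perm n (\<lambda>\<pi>. c * f \<pi>) = c * E_perm n f"
  unfolding E_perm_def by (simp add: sum_distrib_left[symmetric])

lemma E_perm_const: "E_perm n (\<lambda>\<pi>. c) = c"
  unfolding E_perm_def sum_constant card_permutes_interval by simp

lemma sum_permutes_apply:
  assumes "finite S" "i \<in> S"
  shows "(\<Sum>\<pi>\<in>{\<pi>. \<pi> permutes S}. g (\<pi> i)) = fact (card S - 1) * (\<Sum>j\<in>S. g j)"
proof -
  let ?S = "S - {i}"
  have S: "insert i ?S = S" using assms(2) by blast
  have "(\<Sum>\<pi>\<in>{\<pi>. \<pi> permutes S}. g (\<pi> i))
      = (\<Sum>b\<in>S. \<Sum>q\<in>{q. q permutes ?S}. g ((transpose i b \<circ> q) i))"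
    using sum_over_permutations_insert[of ?S i "\<lambda>\<pi>. g (\<pi> i)"] assms(1) S by simp
  also have "\<dots> = (\<Sum>b\<in>S. \<Sum>q\<in>{q. q permutes ?S}. g b)"
    by (intro sum.cong refl) (simp add: permutes_not_in)
  also have "\<dots> = fact (card S - 1) * (\<Sum>j\<in>S. g j)"
    using card_permutations[of ?S "card S - 1"] assms by (simp add: sum_distrib_left mult.commute)
  finally show ?thesis .
qed

lemma E_perm_sum_apply:
  "E_perm n (\<lambda>\<pi>. \<Sum>i\<in>{1..n}. g i (\<pi> i)) = (\<Sum>i\<in>{1..n}. \<Sum>j\<in>{1..n}. g i j) / real n"
proof (cases n)
  case 0
  then show ?thesis by (simp add: E_perm_def)
next
  case (Suc m)
  have "(\<Sum>\<pi>\<in>{\<pi>. \<pi> permutes {1..n}}. \<Sum>i\<in>{1..n}. g i (\<pi> i))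
      = (\<Sum>i\<in>{1..n}. \<Sum>\<pi>\<in>{\<pi>. \<pi> permutes {1..n}}. g i (\<pi> i))"
    by (rule sum.swap)
  also have "\<dots> = (\<Sum>i\<in>{1..n}. fact m * (\<Sum>j\<in>{1..n}. g i j))"
    using Suc by (intro sum.cong refl) (simp add: sum_permutes_apply)
  also have "\<dots> = fact m * (\<Sum>i\<in>{1..n}. \<Sum>j\<in>{1..n}. g i j)"
    by (simp add: sum_distrib_left)
  finally have sum_eq: "(\<Sum>\<pi>\<in>{\<pi>. \<pi> permutes {1..n}}. \<Sum>i\<in>{1..n}. g i (\<pi> i))
      = fact m * (\<Sum>i\<in>{1..n}. \<Sum>j\<in>{1..n}. g i j)" .
  have "(fact n :: real) = real n * fact m" and "real n \<noteq> 0" using Suc by simp_all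
  then show ?thesis unfolding E_perm_def card_permutes_interval sum_eq by simp
qed

lemma sum_interval_grid:
  "(\<Sum>i\<in>{1..m1 * m2}. F i) = (\<Sum>c<m2. \<Sum>r<m1. F (Suc (c * m1 + r)))"
proof -
  have "(\<Sum>i\<in>{1..m1 * m2}. F i) = (\<Sum>i<m2 * m1. F (Suc i))"
    by (simp add: sum.atLeast1_atMost_eq mult.commute)
  also have "\<dots> = (\<Sum>c<m2. \<Sum>i\<in>{c * m1..<c * m1 + m1}. F (Suc i))"
    by (rule sum.nat_group[symmetric])
  also have "\<dots> = (\<Sum>c<m2. \<Sum>r<m1. F (Suc (c * m1 + r)))"
    by (simp add: sum.atLeastLessThan_shift_0 atLeast0LessThan)
  finally show ?thesis .
qed

lemma sum_abs_diff_line: "2 * (\<Sum>b<m. \<bar>real m - real b\<bar>) = real m * (real m + 1)"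
proof -
  have "(\<Sum>b<m. \<bar>real m - real b\<bar>) = (\<Sum>b<m. real m - real b)" by (rule sum.cong) auto
  moreover have "2 * (\<Sum>b<m. real b) = real m * (real m - 1)"
    by (induction m) (simp_all add: algebra_simps)
  ultimately show ?thesis by (simp add: sum_subtractf algebra_simps)
qed

lemma sum_abs_diff_square: "3 * (\<Sum>a<m. \<Sum>b<m. \<bar>real a - real b\<bar>) = real m ^ 3 - real m"
proof (induction m)
  case 0
  then show ?case by simp
next
  case (Suc m)
  have "(\<Sum>a<Suc m. \<Sum>b<Suc m. \<bar>real a - real b\<bar>)
      = (\<Sum>a<m. \<Sum>b<m. \<bar>real a - real b\<bar>) + 2 * (\<Sum>b<m. \<bar>real m - real b\<bar>)"
    by (simp add: sum.distrib abs_minus_commute)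
  then show ?case using Suc sum_abs_diff_line[of m] by (simp add: algebra_simps power3_eq_cube)
qed

lemma cell_dist_grid_lower:
  assumes "r < m1" "r' < m1"
  shows "(\<bar>real r - real r'\<bar> + \<bar>real c - real c'\<bar>) / 2 \<le> cell_dist m1 (Suc (c * m1 + r)) (Suc (c' * m1 + r'))"
  using abs_fst_le_l2dist[of "loc m1 (Suc (c * m1 + r))" "loc m1 (Suc (c' * m1 + r'))"]
    abs_snd_le_l2dist[of "loc m1 (Suc (c * m1 + r))" "loc m1 (Suc (c' * m1 + r'))"]
  by (simp add: loc_grid assms)

lemma sum_cell_dist_lower:
  "real (m1 * m2) * (real (m1 * m2) - 1) * real (m1 + m2) / 6
     \<le> (\<Sum>i\<in>{1..m1 * m2}. \<Sum>j\<in>{1..m1 * m2}. cell_dist m1 i j)"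
proof -
  define A1 where "A1 = (\<Sum>r<m1. \<Sum>r'<m1. \<bar>real r - real r'\<bar>)"
  define A2 where "A2 = (\<Sum>c<m2. \<Sum>c'<m2. \<bar>real c - real c'\<bar>)"
  have "3 * A1 = real m1 ^ 3 - real m1" "3 * A2 = real m2 ^ 3 - real m2"
    unfolding A1_def A2_def by (rule sum_abs_diff_square)+
  then have A1: "A1 = (real m1 ^ 3 - real m1) / 3" and A2: "A2 = (real m2 ^ 3 - real m2) / 3"
    by simp_all
  have "real (m1 * m2) * (real (m1 * m2) - 1) * real (m1 + m2) / 6
      = real m2 * real m2 * A1 / 2 + real m1 * real m1 * A2 / 2"
    unfolding A1 A2 by (simp add: field_simps power3_eq_cube)
  also have "\<dots> = (\<Sum>c<m2. \<Sum>r<m1. \<Sum>c'<m2. \<Sum>r'<m1. (\<bar>real r - real r'\<bar> + \<bar>real c - real c'\<bar>) / 2)"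
    by (simp add: A1_def A2_def sum.distrib add_divide_distrib sum_divide_distrib sum_distrib_left
        sum.swap[of _ "{..<m1}" "{..<m2}"] algebra_simps)
  also have "\<dots> \<le> (\<Sum>c<m2. \<Sum>r<m1. \<Sum>c'<m2. \<Sum>r'<m1. cell_dist m1 (Suc (c * m1 + r)) (Suc (c' * m1 + r')))"
    using cell_dist_grid_lower by (intro sum_mono) simp
  also have "\<dots> = (\<Sum>i\<in>{1..m1 * m2}. \<Sum>j\<in>{1..m1 * m2}. cell_dist m1 i j)"
    unfolding sum_interval_grid ..
  finally show ?thesis .
qed

lemma permutation_transpose_fresh:
  assumes "p permutes S" "finite S" "b \<in> insert a S"
  shows "permutation (transpose a b \<circ> p)"
proof -
  have "p permutes insert a S" using assms(1) by (rule permutes_subset) (rule subset_insertI)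
  moreover have "transpose a b permutes insert a S" using assms(3) by (intro permutes_swap_id) auto
  ultimately have "transpose a b \<circ> p permutes insert a S" by (rule permutes_compose)
  then show ?thesis using assms(2) by (intro permutes_imp_permutation[of "insert a S"]) auto
qed

lemma orb_transpose_fresh_other:
  assumes p: "p permutes S" "finite S" and a: "a \<notin> S" and x: "x \<in> S" "x \<notin> orb p b"
  shows "orb (transpose a b \<circ> p) x = orb p x"
proof (rule orb_cong(1), intro ballI)
  fix y assume y: "y \<in> orb p x"
  have py: "p y \<in> orb p x" using y by (rule apply_in_orb)
  have "p y \<noteq> a" using py orb_subset_permutes[OF p(1) x(1)] a by blast
  moreover have "p y \<noteq> b"
  proof
    assume "p y = b"
    then have "orb p b = orb p x" using py orb_eq[OF permutes_imp_permutation[OF p(2,1)]] by simp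
    then show False using x(2) orb_self[of x p] by simp
  qed
  ultimately show "(transpose a b \<circ> p) y = p y" by simp
qed

lemma orb_transpose_fresh_self:
  assumes p: "p permutes S" "finite S" and a: "a \<notin> S" and b: "b \<in> S"
  shows "orb (transpose a b \<circ> p) b = insert a (orb p b)"
proof -
  define \<sigma> where "\<sigma> = transpose a b \<circ> p"
  have pa: "p a = a" using permutes_not_in[OF p(1) a] .
  have "orb \<sigma> b \<subseteq> insert a (orb p b)"
  proof (rule orb_subsetI)
    show "b \<in> insert a (orb p b)" using orb_self by simp
    fix y assume y: "y \<in> insert a (orb p b)"
    show "\<sigma> y \<in> insert a (orb p b)"
    proof (cases "y = a")
      case True
      then show ?thesis using pa orb_self[of b p] by (simp add: \<sigma>_def)
    next
      case False
      then have py: "p y \<in> orb p b" using y apply_in_orb by blast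
      then have "p y \<noteq> a" using orb_subset_permutes[OF p(1) b] a by blast
      then show ?thesis using py by (cases "p y = b") (simp_all add: \<sigma>_def)
    qed
  qed
  moreover have a_in: "a \<in> orb \<sigma> b"
  proof -
    have perm: "permutation \<sigma>" unfolding \<sigma>_def using p b by (intro permutation_transpose_fresh) auto
    have "b \<in> orb \<sigma> a" using apply_in_orb[OF orb_self, of \<sigma> a] pa by (simp add: \<sigma>_def)
    then show ?thesis using orb_eq[OF perm] orb_self[of a \<sigma>] by blast
  qed
  moreover have "orb p b \<subseteq> orb \<sigma> b"
  proof (rule orb_subsetI)
    show "b \<in> orb \<sigma> b" by (rule orb_self)
    fix y assume "y \<in> orb \<sigma> b"
    then have \<sigma>y: "\<sigma> y \<in> orb \<sigma> b" by (rule apply_in_orb)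
    have py: "p y = transpose a b (\<sigma> y)" by (simp add: \<sigma>_def)
    consider "\<sigma> y = a" | "\<sigma> y = b" | "\<sigma> y \<noteq> a" "\<sigma> y \<noteq> b" by blast
    then show "p y \<in> orb \<sigma> b"
      using \<sigma>y a_in orb_self[of b \<sigma>] by cases (simp_all add: py)
  qed
  ultimately show ?thesis unfolding \<sigma>_def by blast
qed

lemma orb_image_transpose_fresh:
  assumes p: "p permutes S" "finite S" and a: "a \<notin> S" and b: "b \<in> S"
  shows "orb (transpose a b \<circ> p) ` insert a S = insert (insert a (orb p b)) (orb p ` (S - orb p b))"
proof -
  let ?\<sigma> = "transpose a b \<circ> p" and ?O = "orb p b"
  have pm: "permutation ?\<sigma>" using p b by (intro permutation_transpose_fresh) auto
  have "orb ?\<sigma> x = insert a ?O" if "x \<in> insert a ?O" for x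
    using orb_eq[OF pm, of x b] that orb_transpose_fresh_self[OF p a b] by simp
  then have "orb ?\<sigma> ` insert a ?O = {insert a ?O}" by blast
  moreover have "orb ?\<sigma> ` (S - ?O) = orb p ` (S - ?O)"
    using orb_transpose_fresh_other[OF p a] by (intro image_cong) auto
  moreover have "insert a S = insert a ?O \<union> (S - ?O)" using orb_subset_permutes[OF p(1) b] by blast
  ultimately show ?thesis by (metis image_Un insert_is_Un)
qed

text \<open>Every permutation of \<open>insert a S\<close> is \<open>transpose a b \<circ> p\<close> with \<open>p\<close> permuting \<open>S\<close>:
  either \<open>a\<close> becomes a new fixed point (\<open>b = a\<close>) or it joins the cycle of \<open>b\<close>.\<close>

lemma num_cycles_transpose_fresh:
  assumes p: "p permutes S" "finite S" and a: "a \<notin> S" and b: "b \<in> insert a S"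
  shows "num_cycles (transpose a b \<circ> p) (insert a S) = num_cycles p S + (if b = a then 1 else 0)"
proof -
  have inside: "X \<subseteq> S" if "X \<in> orb p ` S" for X
    using that orb_subset_permutes[OF p(1)] by blast
  show ?thesis
  proof (cases "b = a")
    case True
    have "orb p ` insert a S = insert {a} (orb p ` S)"
      using orb_fixpoint[of p a, OF permutes_not_in[OF p(1) a]] by simp
    moreover have "{a} \<notin> orb p ` S" using inside a by blast
    ultimately show ?thesis using True p(2) by (simp add: num_cycles_def)
  next
    case False
    then have b: "b \<in> S" using b by simp
    let ?O = "orb p b"
    let ?rest = "orb p ` (S - ?O)"
    have "orb p ` ?O = {?O}"
      using orb_eq[OF permutes_imp_permutation[OF p(2,1)]] orb_self[of b p] by blast
    moreover have "S = ?O \<union> (S - ?O)" using orb_subset_permutes[OF p(1) b] by blast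
    ultimately have p_cycles: "orb p ` S = insert ?O ?rest" by (metis image_Un insert_is_Un)
    have "insert a ?O \<notin> ?rest" using inside a by blast
    moreover have "?O \<notin> ?rest" using orb_self by blast
    ultimately show ?thesis
      unfolding num_cycles_def orb_image_transpose_fresh[OF p a b] p_cycles using False p(2) by simp
  qed
qed

lemma sum_num_cycles_insert:
  assumes "finite S" "a \<notin> S"
  shows "(\<Sum>\<pi>\<in>{\<pi>. \<pi> permutes insert a S}. real (num_cycles \<pi> (insert a S)))
         = real (Suc (card S)) * (\<Sum>\<pi>\<in>{\<pi>. \<pi> permutes S}. real (num_cycles \<pi> S)) + fact (card S)"
proof -
  have "(\<Sum>\<pi>\<in>{\<pi>. \<pi> permutes insert a S}. real (num_cycles \<pi> (insert a S)))
      = (\<Sum>b\<in>insert a S. \<Sum>q\<in>{q. q permutes S}. real (num_cycles (transpose a b \<circ> q) (insert a S)))"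
    by (rule sum_over_permutations_insert[OF assms])
  also have "\<dots> = (\<Sum>b\<in>insert a S. \<Sum>q\<in>{q. q permutes S}. real (num_cycles q S) + (if b = a then 1 else 0))"
    using num_cycles_transpose_fresh assms by (intro sum.cong refl) simp
  also have "\<dots> = real (Suc (card S)) * (\<Sum>\<pi>\<in>{\<pi>. \<pi> permutes S}. real (num_cycles \<pi> S)) + fact (card S)"
  proof -
    have "(b = a) = False" if "b \<in> S" for b using that assms(2) by auto
    then show ?thesis using assms by (simp add: sum.distrib card_permutations algebra_simps)
  qed
  finally show ?thesis .
qed

lemma E_perm_num_cycles_Suc:
  "E_perm (Suc n) (\<lambda>\<pi>. real (num_cycles \<pi> {1..Suc n}))
     = E_perm n (\<lambda>\<pi>. real (num_cycles \<pi> {1..n})) + 1 / real (Suc n)"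
proof -
  have "{1..Suc n} = insert (Suc n) {1..n}" by auto
  then have "(\<Sum>\<pi>\<in>{\<pi>. \<pi> permutes {1..Suc n}}. real (num_cycles \<pi> {1..Suc n}))
      = real (Suc n) * (\<Sum>\<pi>\<in>{\<pi>. \<pi> permutes {1..n}}. real (num_cycles \<pi> {1..n})) + fact n"
    using sum_num_cycles_insert[of "{1..n}" "Suc n"] by simp
  then show ?thesis
    unfolding E_perm_def card_permutes_interval by (simp add: field_simps)
qed

lemma sqrt_Suc_step: "1 / real (Suc n) \<le> 2 * (sqrt (real (Suc n)) - sqrt (real n))"
proof -
  define s t where "s = sqrt (real n)" and "t = sqrt (real (Suc n))"
  have st: "0 \<le> s" "s \<le> t" "1 \<le> t" by (simp_all add: s_def t_def)
  have tt: "t * t = real (Suc n)" and ss: "s * s = real n" by (simp_all add: s_def t_def)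
  have "t \<le> t * t" using st(3) by simp
  then have sum_le: "t + s \<le> 2 * (t * t)" using st by linarith
  have "(t - s) * (t + s) = 1" using tt ss by (simp add: algebra_simps)
  then have "1 \<le> (t - s) * (2 * (t * t))"
    using mult_left_mono[OF sum_le, of "t - s"] st by linarith
  moreover have "0 < t * t" using st(3) by simp
  ultimately have "1 / (t * t) \<le> 2 * (t - s)" by (simp add: pos_divide_le_eq ac_simps)
  then show ?thesis unfolding s_def[symmetric] t_def[symmetric] tt .
qed

lemma E_perm_num_cycles_le: "E_perm n (\<lambda>\<pi>. real (num_cycles \<pi> {1..n})) \<le> 2 * sqrt (real n)"
proof (induction n)
  case 0
  then show ?case by (simp add: E_perm_def num_cycles_def)
next
  case (Suc n)
  then show ?case using sqrt_Suc_step[of n] unfolding E_perm_num_cycles_Suc by (simp add: algebra_simps)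
qed

section \<open>Asymptotic optimality\<close>

lemma E_perm_sandwich:
  assumes "\<And>\<pi>. \<pi> permutes {1..n} \<Longrightarrow> L \<pi> \<le> f \<pi> \<and> f \<pi> \<le> L \<pi> + W \<pi>"
  shows "E_perm n L \<le> E_perm n f" and "E_perm n f \<le> E_perm n L + E_perm n W"
  using E_perm_mono[of n L f] E_perm_mono[of n f "\<lambda>\<pi>. L \<pi> + W \<pi>"] assms
  by (simp_all add: E_perm_add)

lemma E_perm_cost_lower_ge:
  assumes cp: "0 \<le> cp" and ct: "0 \<le> ct" and two: "2 \<le> m1 * m2"
  shows "ct * (real (m1 * m2) * real (m1 + m2) / 12) \<le> E_perm (m1 * m2) (cost_lower cp ct m1 (m1 * m2))"
proof -
  define n where "n = m1 * m2"
  have n: "2 \<le> real n" using two by (simp add: n_def del: of_nat_mult)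
  have "real n / 12 \<le> (real n - 1) / 6" using n by simp
  then have "real n * real (m1 + m2) / 12 \<le> (real n - 1) / 6 * real (m1 + m2)"
    using mult_right_mono[of "real n / 12" "(real n - 1) / 6" "real (m1 + m2)"] by simp
  also have "\<dots> = real n * (real n - 1) * real (m1 + m2) / 6 / real n"
    using n by simp
  also have "\<dots> \<le> (\<Sum>i\<in>{1..n}. \<Sum>j\<in>{1..n}. cell_dist m1 i j) / real n"
    by (rule divide_right_mono[OF sum_cell_dist_lower[of m1 m2, folded n_def]]) simp
  also have "\<dots> = E_perm n (\<lambda>\<pi>. displacement m1 \<pi> {1..n})"
    using E_perm_sum_apply[of n "\<lambda>i j. cell_dist m1 i j"] by (simp add: displacement_def)
  finally have "ct * (real n * real (m1 + m2) / 12) \<le> E_perm n (\<lambda>\<pi>. ct * displacement m1 \<pi> {1..n})"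
    unfolding E_perm_cmult using ct by (rule mult_left_mono)
  also have "\<dots> \<le> E_perm n (cost_lower cp ct m1 n)"
    using cp by (intro E_perm_mono) (simp add: cost_lower_def)
  finally show ?thesis unfolding n_def .
qed

lemma E_perm_cost_slack_le:
  assumes cp: "0 \<le> cp" and ct: "0 \<le> ct" and one: "1 \<le> m1 * m2"
  shows "E_perm (m1 * m2) (cost_slack cp ct m1 m2) \<le> (2 * cp + 5 * ct) * sqrt (real (m1 * m2)) * real (m1 + m2)"
proof -
  define n where "n = m1 * m2"
  let ?B = "real (m1 + m2)" and ?r = "sqrt (real n)"
  have "1 \<le> real n" using one by (simp add: n_def del: of_nat_mult)
  then have r: "1 \<le> ?r" by simp
  have B: "1 \<le> ?B" using one by (cases m1) auto
  have "E_perm n (cost_slack cp ct m1 m2)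
      = (cp + 2 * ct * ?B) * E_perm n (\<lambda>\<pi>. real (num_cycles \<pi> {1..n})) + ct * ?B"
    unfolding cost_slack_def E_perm_add E_perm_cmult E_perm_const n_def ..
  also have "\<dots> \<le> (cp + 2 * ct * ?B) * (2 * ?r) + ct * ?B"
    using E_perm_num_cycles_le cp ct by (intro add_right_mono mult_left_mono) auto
  also have "\<dots> \<le> (2 * cp + 5 * ct) * ?r * ?B"
    using mult_left_mono[OF B, of "2 * cp * ?r"] mult_left_mono[OF r, of "ct * ?B"] cp ct B r
    by (simp add: algebra_simps)
  finally show ?thesis unfolding n_def .
qed

lemma ratio_deviation_le:
  fixes X Y L D :: real
  assumes "0 < L" "L \<le> X" "X \<le> L + D" "L \<le> Y" "Y \<le> L + D"
  shows "\<bar>X / Y - 1\<bar> \<le> D / L"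
proof -
  have Y: "0 < Y" and D: "0 \<le> D" using assms by linarith+
  have "\<bar>X / Y - 1\<bar> = \<bar>X - Y\<bar> / Y" using Y by (simp add: field_simps)
  also have "\<dots> \<le> D / Y" using assms Y by (intro divide_right_mono) auto
  also have "\<dots> \<le> D / L" using assms D by (intro divide_left_mono) auto
  finally show ?thesis .
qed

definition within_slack :: "real \<Rightarrow> real \<Rightarrow> nat \<Rightarrow> nat \<Rightarrow> ((nat \<Rightarrow> nat) \<Rightarrow> real) \<Rightarrow> bool" where
  "within_slack cp ct m1 m2 f \<longleftrightarrow> (\<forall>\<pi>. \<pi> permutes {1..m1 * m2} \<longrightarrow>
     cost_lower cp ct m1 (m1 * m2) \<pi> \<le> f \<pi> \<and> f \<pi> \<le> cost_lower cp ct m1 (m1 * m2) \<pi> + cost_slack cp ct m1 m2 \<pi>)"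

lemma within_slack_switch_plans:
  assumes "\<And>\<pi>. \<pi> permutes {1..m1 * m2} \<Longrightarrow> alg \<pi> \<in> switch_plans (m1 * m2) \<pi>" "0 \<le> cp" "0 \<le> ct"
  shows "within_slack cp ct m1 m2 (\<lambda>\<pi>. JT cp ct m1 (alg \<pi>))"
  using switch_plan_cost_bounds[OF _ assms(1)] assms(2,3) by (simp add: within_slack_def)

lemma within_slack_Jopt: "0 \<le> cp \<Longrightarrow> 0 \<le> ct \<Longrightarrow> within_slack cp ct m1 m2 (Jopt cp ct m1 m2)"
  using Jopt_cost_bounds by (simp add: within_slack_def)

lemma ratio_deviation_within_slack:
  assumes cp: "0 < cp" and ct: "0 < ct" and two: "2 \<le> m1 * m2"
    and f: "within_slack cp ct m1 m2 f" and g: "within_slack cp ct m1 m2 g"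
  shows "\<bar>E_perm (m1 * m2) f / E_perm (m1 * m2) g - 1\<bar> \<le> 12 * (2 * cp + 5 * ct) / ct / sqrt (real (m1 * m2))"
proof -
  define n where "n = m1 * m2"
  let ?B = "real (m1 + m2)" and ?r = "sqrt (real n)"
  define L where "L = E_perm n (cost_lower cp ct m1 n)"
  define D where "D = E_perm n (cost_slack cp ct m1 m2)"
  have n: "2 \<le> real n" using two by (simp add: n_def del: of_nat_mult)
  have "0 < ?B" using two by (cases m1) auto
  then have pos: "0 < ct * (real n * ?B / 12)" using ct n by simp
  have L: "ct * (real n * ?B / 12) \<le> L"
    unfolding L_def n_def using E_perm_cost_lower_ge cp ct two by simp
  have sandwich: "L \<le> E_perm n h \<and> E_perm n h \<le> L + D" if "within_slack cp ct m1 m2 h" for h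
    using that unfolding L_def D_def n_def within_slack_def by (intro conjI E_perm_sandwich) blast+
  have "\<bar>E_perm n f / E_perm n g - 1\<bar> \<le> D / L"
    using sandwich[OF f] sandwich[OF g] L pos by (intro ratio_deviation_le) auto
  also have "\<dots> \<le> (2 * cp + 5 * ct) * ?r * ?B / (ct * (real n * ?B / 12))"
  proof (rule frac_le)
    show "D \<le> (2 * cp + 5 * ct) * ?r * ?B"
      unfolding D_def n_def using cp ct two by (intro E_perm_cost_slack_le) linarith+
  qed (use L pos cp ct in auto)
  also have "\<dots> = 12 * (2 * cp + 5 * ct) / ct / ?r"
  proof -
    obtain r where r: "?r = r" "0 < r" using n by simp
    then have "real n = r * r" using n by (metis real_sqrt_mult_self of_nat_0_le_iff real_sqrt_pow2 power2_eq_square)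
    then show ?thesis unfolding r(1) using ct r(2) pos by (simp add: field_simps)
  qed
  finally show ?thesis unfolding n_def .
qed

lemma tends_to_one_rate:
  assumes "\<And>m1 m2. 2 \<le> m1 * m2 \<Longrightarrow> \<bar>f m1 m2 - 1\<bar> \<le> C / sqrt (real (m1 * m2))"
  shows "tends_to_one f"
  unfolding tends_to_one_def
proof (intro allI impI)
  fix \<epsilon> :: real assume \<epsilon>: "0 < \<epsilon>"
  define M where "M = nat \<lceil>(C / \<epsilon>)\<^sup>2\<rceil> + 2"
  show "\<exists>M. \<forall>m1 m2. M \<le> m1 * m2 \<longrightarrow> \<bar>f m1 m2 - 1\<bar> < \<epsilon>"
  proof (intro exI allI impI)
    fix m1 m2 :: nat assume M_le: "M \<le> m1 * m2"
    define n where "n = m1 * m2"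
    have "(C / \<epsilon>)\<^sup>2 < real n" using M_le unfolding M_def n_def by linarith
    then have "\<bar>C / \<epsilon>\<bar> < sqrt (real n)" using real_sqrt_less_mono by fastforce
    then have "C < \<epsilon> * sqrt (real n)" using \<epsilon> by (simp add: abs_less_iff field_simps)
    moreover have "2 \<le> n" using M_le by (simp add: M_def n_def)
    then have "0 < sqrt (real n)" by simp
    ultimately have "C / sqrt (real n) < \<epsilon>" by (simp add: pos_divide_less_eq mult.commute)
    moreover have "2 \<le> m1 * m2" using M_le by (simp add: M_def)
    ultimately show "\<bar>f m1 m2 - 1\<bar> < \<epsilon>" using assms unfolding n_def by fastforce
  qed
qed

theorem corollary2:
  fixes cp ct :: real
  assumes "cp > 0" and "ct > 0"
  shows "(\<forall>alg :: nat \<Rightarrow> nat \<Rightarrow> (nat \<Rightarrow> nat) \<Rightarrow> nat list.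
            (\<forall>m1 m2 \<pi>. \<pi> permutes {1..m1 * m2} \<longrightarrow> alg m1 m2 \<pi> \<in> sweep_plans (m1 * m2) \<pi>) \<longrightarrow>
            tends_to_one (\<lambda>m1 m2.
               E_perm (m1 * m2) (\<lambda>\<pi>. JT cp ct m1 (alg m1 m2 \<pi>)) /
               E_perm (m1 * m2) (\<lambda>\<pi>. Jopt cp ct m1 m2 \<pi>)))
       \<and> (\<forall>alg :: nat \<Rightarrow> nat \<Rightarrow> (nat \<Rightarrow> nat) \<Rightarrow> nat list.
            (\<forall>m1 m2 \<pi>. \<pi> permutes {1..m1 * m2} \<longrightarrow> alg m1 m2 \<pi> \<in> switch_plans (m1 * m2) \<pi>) \<longrightarrow>
            tends_to_one (\<lambda>m1 m2.
               E_perm (m1 * m2) (\<lambda>\<pi>. JT cp ct m1 (alg m1 m2 \<pi>)) /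
               E_perm (m1 * m2) (\<lambda>\<pi>. Jopt cp ct m1 m2 \<pi>)))"
proof -
  have switch: "tends_to_one (\<lambda>m1 m2.
      E_perm (m1 * m2) (\<lambda>\<pi>. JT cp ct m1 (alg m1 m2 \<pi>)) / E_perm (m1 * m2) (\<lambda>\<pi>. Jopt cp ct m1 m2 \<pi>))"
    if alg: "\<forall>m1 m2 \<pi>. \<pi> permutes {1..m1 * m2} \<longrightarrow> alg m1 m2 \<pi> \<in> switch_plans (m1 * m2) \<pi>" for alg
  proof (rule tends_to_one_rate)
    fix m1 m2 :: nat assume "2 \<le> m1 * m2"
    moreover have "within_slack cp ct m1 m2 (\<lambda>\<pi>. JT cp ct m1 (alg m1 m2 \<pi>))"
      using alg assms by (intro within_slack_switch_plans) auto
    moreover have "within_slack cp ct m1 m2 (Jopt cp ct m1 m2)"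
      using assms by (intro within_slack_Jopt) auto
    ultimately show "\<bar>E_perm (m1 * m2) (\<lambda>\<pi>. JT cp ct m1 (alg m1 m2 \<pi>)) / E_perm (m1 * m2) (\<lambda>\<pi>. Jopt cp ct m1 m2 \<pi>) - 1\<bar>
        \<le> 12 * (2 * cp + 5 * ct) / ct / sqrt (real (m1 * m2))"
      using assms by (intro ratio_deviation_within_slack) auto
  qed
  moreover have "alg m1 m2 \<pi> \<in> switch_plans (m1 * m2) \<pi>"
    if "\<forall>m1 m2 \<pi>. \<pi> permutes {1..m1 * m2} \<longrightarrow> alg m1 m2 \<pi> \<in> sweep_plans (m1 * m2) \<pi>"
      and "\<pi> permutes {1..m1 * m2}" for alg m1 m2 \<pi>
    using that sweep_plans_subset_switch_plans by blast
  ultimately show ?thesis by blast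
qed

end
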